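(* Let $A,B$ be real numbers with $A>2B>1$. Then the equation $x=A+B\log(1+x\log x)$ has a unique positive root $x^*=x^*(A,B)$, and it satisfies $$A+B\log(1+A\log A)\ <\ x^*\ <\ A+B\log(1+A\log A)\Bigl(1+\frac{2B}{A-2B}\Bigr).$$ *)

theory Defs
  imports Complex_Main
begin

end

theory Submission
  imports Defs
begin

text \<open>On \<open>(0, 1]\<close> one has \<open>ln (1 + x ln x) \<ge> 2 (x - 1)\<close>, which with \<open>2B < A\<close> excludes
  roots there; beyond \<open>1\<close> the right-hand side exceeds \<open>A\<close>, so every root lies above \<open>A\<close>.
  For \<open>t \<ge> 1\<close> the quotient \<open>(1 + t ln t) / t\<^sup>2\<close> decreases, so from \<open>a\<close> to \<open>x > a\<close> the
  function \<open>ln (1 + t ln t)\<close> grows by less than \<open>2 ln (x / a) < 2 (x - a) / a\<close>; multiplied by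
  \<open>B < a / 2\<close> this is less than \<open>x - a\<close>. Hence \<open>A + B ln (1 + x ln x) - x\<close> is strictly
  decreasing on \<open>[A, \<infinity>)\<close>, which gives uniqueness; it is positive at \<open>A\<close> and, by the same
  estimate, negative at the claimed upper bound.\<close>

lemma mult_ln_ge_minus_one:
  fixes x :: real
  assumes "0 < x"
  shows "x - 1 \<le> x * ln x"
  using ln_le_minus_one[of "1 / x"] assms by (simp add: ln_div field_simps)

lemma one_plus_mult_ln_pos:
  fixes x :: real
  assumes "1 \<le> x"
  shows "0 < 1 + x * ln x"
  using assms by (simp add: add_pos_nonneg)

lemma ln_one_plus_mult_ln_strict_mono:
  fixes a b :: real
  assumes "1 \<le> a" "a < b"
  shows "ln (1 + a * ln a) < ln (1 + b * ln b)"
proof -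
  have "a * ln a < b * ln b"
    using assms by (intro mult_le_less_imp_less) auto
  then show ?thesis
    using assms by (simp add: one_plus_mult_ln_pos)
qed

lemma continuous_on_ln_one_plus_mult_ln: "continuous_on {1..} (\<lambda>t::real. ln (1 + t * ln t))"
  by (intro continuous_intros) (auto dest: one_plus_mult_ln_pos)

lemma mult_ln_ge_minus_exp_minus_one:
  fixes x :: real
  assumes "0 < x"
  shows "- exp (-1) \<le> x * ln x"
proof -
  have "ln (1 / (x * exp 1)) \<le> 1 / (x * exp 1) - 1"
    using assms by (intro ln_le_minus_one) simp
  then have "- ln x \<le> 1 / (x * exp 1)"
    using assms by (simp add: ln_div ln_mult)
  then have "x * (- ln x) \<le> x * (1 / (x * exp 1))"
    using assms by (intro mult_left_mono) auto
  then have "- (x * ln x) \<le> exp (-1)"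
    using assms by (simp add: exp_minus inverse_eq_divide)
  then show ?thesis
    by linarith
qed

lemma ln_one_plus_mult_ln_ge:
  fixes x :: real
  assumes "0 < x" "x \<le> 1"
  shows "2 * (x - 1) \<le> ln (1 + x * ln x)"
proof (cases "x \<le> 1 / 2")
  case True
  have "exp (-1) \<le> 1 - exp (-1 :: real)"
    using exp_ge_add_one_self[of 1] by (simp add: exp_minus field_simps)
  then have "exp (-1) \<le> 1 + x * ln x"
    using mult_ln_ge_minus_exp_minus_one[OF assms(1)] by linarith
  then have "-1 \<le> ln (1 + x * ln x)"
    by (subst ln_ge_iff) (auto intro: less_le_trans[OF exp_gt_zero])
  moreover have "2 * (x - 1) \<le> -1"
    using True by simp
  ultimately show ?thesis
    by linarith
next
  case False
  have "x - 1 \<le> x * ln x"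
    using mult_ln_ge_minus_one[OF assms(1)] .
  then have "ln x \<le> ln (1 + x * ln x)"
    using assms by simp
  moreover have "0 \<le> (1 - x) * (2 * x - 1)"
    using assms False by (intro mult_nonneg_nonneg) auto
  then have "2 * (x - 1) * x \<le> x - 1"
    by (simp add: algebra_simps)
  then have "2 * (x - 1) \<le> (x - 1) / x"
    using assms by (simp add: pos_le_divide_eq)
  moreover have "(x - 1) / x \<le> ln x"
    using mult_ln_ge_minus_one[OF assms(1)] assms by (simp add: pos_divide_le_eq mult.commute)
  ultimately show ?thesis
    by linarith
qed

lemma less_root_equation_rhs_of_le_one:
  fixes A B x :: real
  assumes "1 < A" "2 * B \<le> A" "0 < x" "x \<le> 1"
  shows "x < A + B * ln (1 + x * ln x)"
proof -
  have "exp (-1) < (1 :: real)"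
    by simp
  then have "0 < 1 + x * ln x"
    using mult_ln_ge_minus_exp_minus_one[OF assms(3)] by linarith
  moreover have "x * ln x \<le> 0"
    using assms by (simp add: mult_nonneg_nonpos)
  ultimately have "ln (1 + x * ln x) \<le> 0"
    by simp
  then have "A / 2 * ln (1 + x * ln x) \<le> B * ln (1 + x * ln x)"
    using assms(2) by (intro mult_right_mono_neg) auto
  moreover have "A / 2 * (2 * (x - 1)) \<le> A / 2 * ln (1 + x * ln x)"
    using ln_one_plus_mult_ln_ge[OF assms(3,4)] assms(1) by (intro mult_left_mono) auto
  moreover have "x < A * x"
    using assms by simp
  ultimately show ?thesis
    by (simp add: algebra_simps)
qed

lemma one_plus_mult_ln_div_square_antimono:
  fixes a x :: real
  assumes "1 \<le> a" "a \<le> x"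
  shows "(1 + x * ln x) / x\<^sup>2 \<le> (1 + a * ln a) / a\<^sup>2"
proof (rule DERIV_nonpos_imp_nonincreasing[OF assms(2)])
  fix t :: real
  assume "a \<le> t" "t \<le> x"
  then have t: "1 \<le> t"
    using assms by simp
  have "DERIV (\<lambda>t. (1 + t * ln t) / t\<^sup>2) t :> (t - t * ln t - 2) / t ^ 3"
    using t by (auto intro!: derivative_eq_intros simp: field_simps power2_eq_square power3_eq_cube)
  moreover have "t - 1 \<le> t * ln t"
    using mult_ln_ge_minus_one t by simp
  then have "(t - t * ln t - 2) / t ^ 3 \<le> 0"
    using t by (intro divide_nonpos_pos) auto
  ultimately show "\<exists>y. DERIV (\<lambda>t. (1 + t * ln t) / t\<^sup>2) t :> y \<and> y \<le> 0"
    by blast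
qed

lemma ln_one_plus_mult_ln_increment_less:
  fixes a x :: real
  assumes "1 \<le> a" "a < x"
  shows "ln (1 + x * ln x) < ln (1 + a * ln a) + 2 * (x - a) / a"
proof -
  have pos: "0 < 1 + a * ln a" "0 < 1 + x * ln x"
    using assms by (simp_all add: one_plus_mult_ln_pos)
  have "1 + x * ln x \<le> (1 + a * ln a) * (x / a)\<^sup>2"
    using one_plus_mult_ln_div_square_antimono[of a x] assms
    by (simp add: field_simps power2_eq_square)
  then have "ln (1 + x * ln x) \<le> ln ((1 + a * ln a) * (x / a)\<^sup>2)"
    using pos by simp
  also have "\<dots> = ln (1 + a * ln a) + 2 * ln (x / a)"
    using pos assms by (simp add: ln_mult ln_realpow)
  also have "ln (x / a) < x / a - 1"
    using ln_add_one_self_less_self[of "x / a - 1"] assms by (simp add: field_simps)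
  then have "ln (1 + a * ln a) + 2 * ln (x / a) < ln (1 + a * ln a) + 2 * (x - a) / a"
    using assms by (simp add: field_simps)
  finally show ?thesis .
qed

lemma scaled_ln_one_plus_mult_ln_increment_less:
  fixes a b B :: real
  assumes "0 \<le> B" "2 * B < a" "1 \<le> a" "a < b"
  shows "B * ln (1 + b * ln b) - B * ln (1 + a * ln a) < b - a"
proof -
  have "B * ln (1 + b * ln b) \<le> B * (ln (1 + a * ln a) + 2 * (b - a) / a)"
    using ln_one_plus_mult_ln_increment_less[OF assms(3,4)] assms(1) by (intro mult_left_mono) auto
  moreover have "2 * B * (b - a) < a * (b - a)"
    using assms by (intro mult_strict_right_mono) auto
  then have "2 * B * (b - a) / a < b - a"
    using assms by (simp add: field_simps)
  ultimately show ?thesis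
    by (simp add: algebra_simps)
qed

lemma root_gt_A:
  fixes A B x :: real
  assumes "1 < A" "0 < B" "2 * B \<le> A" "0 < x" "x = A + B * ln (1 + x * ln x)"
  shows "A < x"
proof -
  have "1 < x"
    using less_root_equation_rhs_of_le_one[of A B x] assms by linarith
  then have "0 < B * ln (1 + x * ln x)"
    using ln_one_plus_mult_ln_strict_mono[of 1 x] assms by simp
  then show ?thesis
    using assms by linarith
qed

lemma root_exists_between:
  fixes A B :: real
  assumes "1 < A" "0 < B" "2 * B < A"
  defines "U \<equiv> A + B * ln (1 + A * ln A) * (1 + 2 * B / (A - 2 * B))"
  shows "\<exists>r. A < r \<and> r < U \<and> r = A + B * ln (1 + r * ln r)"
proof -
  define g where "g t = A + B * ln (1 + t * ln t) - t" for t
  define D where "D = B * ln (1 + A * ln A)"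
  have "0 < D"
    using ln_one_plus_mult_ln_strict_mono[of 1 A] assms by (simp add: D_def)
  then have "g A > 0"
    by (simp add: g_def D_def)
  have U_minus_A: "U - A = D * A / (A - 2 * B)"
    using assms(1-3) by (simp add: U_def D_def field_simps)
  moreover have "0 < D * A / (A - 2 * B)"
    using \<open>0 < D\<close> assms(1-3) by simp
  ultimately have AU: "A < U"
    by linarith
  have "(U - A) - 2 * B * (U - A) / A = (U - A) * (A - 2 * B) / A"
    using assms(1-3) by (simp add: field_simps)
  also have "\<dots> = D"
    using U_minus_A assms(1-3) by simp
  finally have U_eq: "(U - A) - 2 * B * (U - A) / A = D" .
  have "B * ln (1 + U * ln U) < B * (ln (1 + A * ln A) + 2 * (U - A) / A)"
    using ln_one_plus_mult_ln_increment_less[of A U] AU assms(1-3) by simp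
  then have "g U < 0"
    using U_eq by (simp add: g_def D_def algebra_simps)
  have "continuous_on {A..U} g"
    unfolding g_def using assms(1)
    by (intro continuous_intros continuous_on_subset[OF continuous_on_ln_one_plus_mult_ln]) auto
  then obtain r where "A \<le> r" "r \<le> U" "g r = 0"
    using IVT2'[of g U 0 A] \<open>g U < 0\<close> \<open>g A > 0\<close> AU by auto
  moreover from this have "r \<noteq> A" "r \<noteq> U"
    using \<open>g U < 0\<close> \<open>g A > 0\<close> by auto
  ultimately show ?thesis
    by (intro exI[of _ r]) (auto simp: g_def)
qed

theorem lemma3:
  fixes A B :: real
  assumes "A > 2 * B" and "2 * B > 1"
  shows "(\<exists>!x::real. x > 0 \<and> x = A + B * ln (1 + x * ln x)) \<and>
         (\<forall>x::real. x > 0 \<and> x = A + B * ln (1 + x * ln x) \<longrightarrow>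
            A + B * ln (1 + A * ln A) < x \<and>
            x < A + B * ln (1 + A * ln A) * (1 + 2 * B / (A - 2 * B)))"
proof -
  have "1 < A" "0 < B"
    using assms by auto
  then obtain r where r: "A < r" "r = A + B * ln (1 + r * ln r)"
    and r_less: "r < A + B * ln (1 + A * ln A) * (1 + 2 * B / (A - 2 * B))"
    using root_exists_between[of A B] assms by auto
  have root_eq_r: "x = r" if "0 < x" "x = A + B * ln (1 + x * ln x)" for x
  proof -
    have "A < x"
      using root_gt_A[of A B x] that \<open>1 < A\<close> \<open>0 < B\<close> assms by simp
    then show ?thesis
      using scaled_ln_one_plus_mult_ln_increment_less[of B x r]
        scaled_ln_one_plus_mult_ln_increment_less[of B r x] that r \<open>1 < A\<close> \<open>0 < B\<close> assms
      by (cases x r rule: linorder_cases) auto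
  qed
  have "B * ln (1 + A * ln A) < B * ln (1 + r * ln r)"
    using ln_one_plus_mult_ln_strict_mono[of A r] r \<open>1 < A\<close> \<open>0 < B\<close> by simp
  then show ?thesis
    using root_eq_r r r_less \<open>1 < A\<close> by (intro conjI ex1I[of _ r]) auto
qed

end
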